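(* Let $R$ be a commutative Noetherian ring with non-zero identity. Let $\mathcal{P}$ be a finite subset of $R$, and let $I$ be the ideal of $R$ generated by $\mathcal{P}$. Let $r \ge 0$ be an integer. Assume that there exist subsets $\mathcal{P}_0, \mathcal{P}_1, \ldots, \mathcal{P}_r$ of $\mathcal{P}$ such that: (SV1) $\mathcal{P} = \mathcal{P}_0 \cup \mathcal{P}_1 \cup \cdots \cup \mathcal{P}_r$; (SV2) $\mathcal{P}_0$ has exactly one element; (SV3) for each $\ell$ with $0 < \ell \le r$ and for every $a, a'' \in \mathcal{P}_\ell$ with $a \ne a''$, there exist an integer $\ell'$ with $0 \le \ell' < \ell$ and elements $a' \in \mathcal{P}_{\ell'}$ and $b \in I$ such that $a a'' = a' b$. Set $g_\ell = \sum_{a \in \mathcal{P}_\ell} a$ for $\ell = 0, 1, \ldots, r$. Then $J = (g_0, g_1, \ldots, g_r)$ is a reduction of $I$.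
   Context: An ideal $J \subseteq I$ is called a reduction of $I$ if there exists an integer $s \ge 1$ such that $I^{s+1} = J I^{s}$. *)

theory Defs
  imports "HOL-Algebra.Ideal_Product" "HOL-Algebra.Ring_Divisibility"
begin

primrec ideal_power :: "('a, 'b) ring_scheme \<Rightarrow> 'a set \<Rightarrow> nat \<Rightarrow> 'a set" where
  "ideal_power R I 0 = carrier R"
| "ideal_power R I (Suc n) = ideal_prod R I (ideal_power R I n)"

definition is_reduction :: "('a, 'b) ring_scheme \<Rightarrow> 'a set \<Rightarrow> 'a set \<Rightarrow> bool" where
  "is_reduction R J I \<longleftrightarrow> J \<subseteq> I \<and>
     (\<exists>s::nat. s \<ge> 1 \<and> ideal_power R I (s + 1) = ideal_prod R J (ideal_power R I s))"

end

(* With n = card P, every product of n + 1 generators lies in J I^n, so I^(n+1) = J I^n.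
   A product containing the generator x0 of P_0 is in J I^n because g_0 = x0.  Otherwise,
   by pigeonhole, some a of level l > 0 occurs twice, giving a a m.  Expanding g_l a m in J I^n
   leaves a a m plus terms a'' a m = b a' m with a' of level below l and b in I; expanding b
   over P, these are products in which a pair of level-l factors has been traded for a factor
   of lower level and an arbitrary generator, so they are in J I^n by induction on a weight
   that favours low levels. *)

theory Submission
  imports Defs
begin

primrec ring_prod_list :: "('a, 'b) ring_scheme \<Rightarrow> 'a list \<Rightarrow> 'a" where
  "ring_prod_list R [] = \<one>\<^bsub>R\<^esub>"
| "ring_prod_list R (x # xs) = x \<otimes>\<^bsub>R\<^esub> ring_prod_list R xs"

context cring
begin

lemma ideal_finsum_closed:
  assumes T: "ideal T R" and "finite A" and "\<And>x. x \<in> A \<Longrightarrow> f x \<in> T"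
  shows "finsum R f A \<in> T"
  using assms(2,3)
proof (induction A rule: finite_induct)
  case empty
  then show ?case using T by (simp add: additive_subgroup.zero_closed ideal.axioms(1))
next
  case (insert x F)
  then have "f \<in> insert x F \<rightarrow> carrier R" using ideal.Icarr[OF T] by auto
  then show ?case using insert T by (simp add: finsum_insert additive_subgroup.a_closed ideal.axioms(1))
qed

lemma ideal_add_cancel_right:
  assumes T: "ideal T R" and "u \<in> carrier R" "v \<in> carrier R" and "u \<oplus> v \<in> T" "v \<in> T"
  shows "u \<in> T"
proof -
  have "u = (u \<oplus> v) \<oplus> \<ominus> v" using assms(2,3) by (simp add: a_assoc r_neg)
  moreover have "\<ominus> v \<in> T" using assms by (simp add: additive_subgroup.a_inv_closed ideal.axioms(1))
  ultimately show ?thesis using assms by (metis additive_subgroup.a_closed ideal.axioms(1))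
qed

lemma ideal_mult_preimage:
  assumes T: "ideal T R" and c: "c \<in> carrier R"
  shows "ideal {y \<in> carrier R. y \<otimes> c \<in> T} R"
proof (rule idealI)
  show "subgroup {y \<in> carrier R. y \<otimes> c \<in> T} (add_monoid R)"
  proof (rule add.subgroupI)
    show "{y \<in> carrier R. y \<otimes> c \<in> T} \<noteq> {}" using c T
      by (auto intro!: exI[of _ \<zero>] simp: additive_subgroup.zero_closed ideal.axioms(1))
  qed (use c T in \<open>auto simp: l_minus l_distr additive_subgroup.a_inv_closed
                               additive_subgroup.a_closed ideal.axioms(1)\<close>)
qed (use c T in \<open>auto simp: m_assoc ideal.I_l_closed ring_axioms,
                   metis m_assoc m_comm ideal.I_l_closed\<close>)

lemma genideal_mult_mem:
  assumes T: "ideal T R" and "S \<subseteq> carrier R" "c \<in> carrier R"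
    and "\<And>s. s \<in> S \<Longrightarrow> s \<otimes> c \<in> T" and "y \<in> Idl S"
  shows "y \<otimes> c \<in> T"
proof -
  have "Idl S \<subseteq> {y \<in> carrier R. y \<otimes> c \<in> T}"
    using assms by (intro genideal_minimal ideal_mult_preimage) auto
  then show ?thesis using assms(5) by auto
qed

lemma ideal_prod_mono_left:
  assumes "ideal J R" "ideal K R" "J \<subseteq> I"
  shows "J \<cdot> K \<subseteq> I \<cdot> K"
proof
  fix s assume "s \<in> J \<cdot> K" then show "s \<in> I \<cdot> K"
    by (induction s rule: ideal_prod.induct) (use assms in \<open>auto intro: ideal_prod.intros\<close>)
qed

lemma ideal_power_is_ideal: "ideal I R \<Longrightarrow> ideal (ideal_power R I k) R"
  by (induction k) (auto simp: oneideal ideal_prod_is_ideal)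

lemma ring_prod_list_closed: "set xs \<subseteq> carrier R \<Longrightarrow> ring_prod_list R xs \<in> carrier R"
  by (induction xs) auto

lemma ring_prod_list_move_to_front:
  "set (us @ x # ws) \<subseteq> carrier R \<Longrightarrow>
   ring_prod_list R (us @ x # ws) = x \<otimes> ring_prod_list R (us @ ws)"
  by (induction us) (auto simp: m_lcomm ring_prod_list_closed)

lemma ring_prod_list_in_ideal_power:
  "set xs \<subseteq> I \<Longrightarrow> ring_prod_list R xs \<in> ideal_power R I (length xs)"
  by (induction xs) (auto intro: ideal_prod.prod)

text \<open>The multiplier \<open>c\<close> makes the induction on \<open>k\<close> go through: in the step the
  first factor of a product of generators is absorbed into it.\<close>

lemma ideal_power_genideal_mult_mem:
  assumes S: "S \<subseteq> carrier R" and T: "ideal T R"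
  shows "c \<in> carrier R \<Longrightarrow>
    (\<And>xs. length xs = k \<Longrightarrow> set xs \<subseteq> S \<Longrightarrow> ring_prod_list R xs \<otimes> c \<in> T) \<Longrightarrow>
    y \<in> ideal_power R (Idl S) k \<Longrightarrow> y \<otimes> c \<in> T"
proof (induction k arbitrary: c y)
  case 0
  then show ?case using T "0.prems"(2)[of "[]"] by (simp add: ideal.I_l_closed)
next
  case (Suc k)
  have IS: "ideal (Idl S) R" using S by (rule genideal_ideal)
  have ISk: "ideal (ideal_power R (Idl S) k) R" using IS by (rule ideal_power_is_ideal)
  from Suc.prems(3) have "y \<in> (Idl S) \<cdot> ideal_power R (Idl S) k" by simp
  then show ?case
  proof (induction y rule: ideal_prod.induct)
    case (prod i j)
    have j: "j \<in> carrier R" using ISk prod(2) by (simp add: ideal.Icarr)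
    have "s \<otimes> (j \<otimes> c) \<in> T" if s: "s \<in> S" for s
    proof -
      have "j \<otimes> (s \<otimes> c) \<in> T"
      proof (rule Suc.IH)
        fix xs assume xs: "length xs = k" "set xs \<subseteq> S"
        have "ring_prod_list R (s # xs) \<otimes> c \<in> T" using Suc.prems(2)[of "s # xs"] xs s by simp
        then show "ring_prod_list R xs \<otimes> (s \<otimes> c) \<in> T"
          using s xs S Suc.prems(1) ring_prod_list_closed[of xs] by (simp add: subset_iff m_ac)
      qed (use s S Suc.prems(1) prod(2) in auto)
      then show ?thesis using s S j Suc.prems(1) by (auto simp: m_ac)
    qed
    then have "i \<otimes> (j \<otimes> c) \<in> T"
      using genideal_mult_mem[OF T S _ _ prod(1)] j Suc.prems(1) by auto
    moreover have "i \<in> carrier R" using IS prod(1) by (simp add: ideal.Icarr)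
    ultimately show ?case using j Suc.prems(1) by (simp add: m_assoc)
  next
    case (sum s1 s2)
    then have "s1 \<in> carrier R" "s2 \<in> carrier R" using ideal_prod_in_carrier[OF IS ISk] by auto
    then show ?case using sum Suc.prems(1) T
      by (simp add: l_distr additive_subgroup.a_closed ideal.axioms(1))
  qed
qed

lemma ideal_power_genideal_subset:
  assumes "S \<subseteq> carrier R" "ideal T R"
    and "\<And>xs. length xs = k \<Longrightarrow> set xs \<subseteq> S \<Longrightarrow> ring_prod_list R xs \<in> T"
  shows "ideal_power R (Idl S) k \<subseteq> T"
proof
  fix y assume y: "y \<in> ideal_power R (Idl S) k"
  have "ring_prod_list R xs \<otimes> \<one> \<in> T" if "length xs = k" "set xs \<subseteq> S" for xs
    using assms(3)[OF that] assms(1) that ring_prod_list_closed[of xs] by auto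
  then have "y \<otimes> \<one> \<in> T" using ideal_power_genideal_mult_mem[OF assms(1,2) _ _ y] by blast
  moreover have "y \<in> carrier R"
    using y ideal.Icarr[OF ideal_power_is_ideal[OF genideal_ideal[OF assms(1)]]] by blast
  ultimately show "y \<in> T" by simp
qed

end

locale layered_generators = cring R for R (structure) +
  fixes P :: "'a set" and r :: nat and Ps :: "nat \<Rightarrow> 'a set"
  assumes finite_gens: "finite P" and gens_carrier: "P \<subseteq> carrier R"
    and layer_subset: "l \<le> r \<Longrightarrow> Ps l \<subseteq> P"
    and gens_eq_layers: "P = (\<Union>l\<in>{0..r}. Ps l)"
    and card_layer0: "card (Ps 0) = 1"
    and layer_mult: "\<lbrakk>0 < l; l \<le> r; a \<in> Ps l; a'' \<in> Ps l; a \<noteq> a''\<rbrakk> \<Longrightarrow>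
      \<exists>l' a' b. l' < l \<and> a' \<in> Ps l' \<and> b \<in> Idl P \<and> a \<otimes> a'' = a' \<otimes> b"
begin

definition layer_sum :: "nat \<Rightarrow> 'a" where
  "layer_sum l = (\<Oplus>a\<in>Ps l. a)"

definition layer_ideal :: "'a set" where
  "layer_ideal = Idl (layer_sum ` {0..r})"

definition reduction_target :: "'a set" where
  "reduction_target = layer_ideal \<cdot> ideal_power R (Idl P) (card P)"

definition level :: "'a \<Rightarrow> nat" where
  "level x = (LEAST l. x \<in> Ps l)"

text \<open>A generator of level \<open>l' < l\<close> outweighs two of level \<open>l\<close>, so trading \<open>a a\<close> for
  \<open>p a'\<close> increases the weight, which is bounded by \<open>weight_le\<close>.\<close>

definition weight :: "'a list \<Rightarrow> nat" where
  "weight xs = (\<Sum>x\<leftarrow>xs. 2 ^ (r - level x))"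

lemma Idl_gens_ideal: "ideal (Idl P) R"
  using gens_carrier by (rule genideal_ideal)

lemma gens_subset_Idl: "P \<subseteq> Idl P"
  using gens_carrier by (rule genideal_self)

lemma finite_layer: "l \<le> r \<Longrightarrow> finite (Ps l)"
  using layer_subset finite_gens finite_subset by blast

lemma layer_carrier: "l \<le> r \<Longrightarrow> Ps l \<subseteq> carrier R"
  using layer_subset gens_carrier by blast

lemma layer_sum_in_Idl: "l \<le> r \<Longrightarrow> layer_sum l \<in> Idl P"
  unfolding layer_sum_def using layer_subset gens_subset_Idl
  by (intro ideal_finsum_closed[OF Idl_gens_ideal finite_layer]) auto

lemma layer_ideal_subset: "layer_ideal \<subseteq> Idl P"
  unfolding layer_ideal_def using layer_sum_in_Idl by (intro genideal_minimal Idl_gens_ideal) auto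

lemma layer_sums_carrier: "layer_sum ` {0..r} \<subseteq> carrier R"
  using layer_sum_in_Idl ideal.Icarr[OF Idl_gens_ideal] by auto

lemma layer_ideal_ideal: "ideal layer_ideal R"
  unfolding layer_ideal_def using layer_sums_carrier by (rule genideal_ideal)

lemma layer_sum_in_layer_ideal: "l \<le> r \<Longrightarrow> layer_sum l \<in> layer_ideal"
  unfolding layer_ideal_def using genideal_self[OF layer_sums_carrier] by auto

lemma layer0_subset_layer_ideal: "Ps 0 \<subseteq> layer_ideal"
proof -
  obtain x0 where Ps0: "Ps 0 = {x0}" using card_layer0 card_1_singletonE by blast
  then have "layer_sum 0 = x0" using layer_carrier[of 0] by (simp add: layer_sum_def finsum_singleton)
  then show ?thesis using Ps0 layer_sum_in_layer_ideal[of 0] by simp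
qed

lemma reduction_target_ideal: "ideal reduction_target R"
  unfolding reduction_target_def
  using layer_ideal_ideal ideal_power_is_ideal[OF Idl_gens_ideal] by (rule ideal_prod_is_ideal)

lemma level_mem: "x \<in> P \<Longrightarrow> x \<in> Ps (level x) \<and> level x \<le> r"
proof -
  assume "x \<in> P"
  then obtain l where l: "l \<le> r" "x \<in> Ps l" using gens_eq_layers by auto
  have "x \<in> Ps (level x)" unfolding level_def using l(2) by (rule LeastI)
  moreover have "level x \<le> l" unfolding level_def using l(2) by (rule Least_le)
  ultimately show ?thesis using l by simp
qed

lemma level_le: "x \<in> Ps l \<Longrightarrow> level x \<le> l"
  unfolding level_def by (rule Least_le)

lemma weight_Cons: "weight (x # xs) = 2 ^ (r - level x) + weight xs"
  by (simp add: weight_def)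

lemma weight_append: "weight (xs @ ys) = weight xs + weight ys"
  by (simp add: weight_def)

lemma weight_le: "weight xs \<le> length xs * 2 ^ r"
proof (induction xs)
  case (Cons x xs)
  have "(2::nat) ^ (r - level x) \<le> 2 ^ r" by (rule power_increasing) auto
  from add_mono[OF this Cons.IH] show ?case by (simp add: weight_def)
qed (simp add: weight_def)

context
  fixes a :: 'a and rest :: "'a list"
  assumes a_gen: "a \<in> P" and level_a_pos: "0 < level a"
    and rest_gens: "set rest \<subseteq> P" and rest_length: "Suc (length rest) = card P"
    and heavier_in_target: "\<And>ys. length ys = Suc (card P) \<Longrightarrow> set ys \<subseteq> P \<Longrightarrow>
      weight (a # a # rest) < weight ys \<Longrightarrow> ring_prod_list R ys \<in> reduction_target"
begin

lemma rest_prod_closed: "ring_prod_list R rest \<in> carrier R"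
  using rest_gens gens_carrier by (intro ring_prod_list_closed) auto

lemma layer_mate_times_in_target:
  assumes x: "x \<in> Ps (level a)" "x \<noteq> a"
  shows "x \<otimes> (a \<otimes> ring_prod_list R rest) \<in> reduction_target"
proof -
  define m where "m = ring_prod_list R rest"
  have m: "m \<in> carrier R" unfolding m_def by (rule rest_prod_closed)
  have a: "a \<in> Ps (level a)" "level a \<le> r" using level_mem[OF a_gen] by auto
  obtain l' a' b where l': "l' < level a" "a' \<in> Ps l'" and b: "b \<in> Idl P"
    and ax: "a \<otimes> x = a' \<otimes> b"
    using layer_mult[OF level_a_pos a(2) a(1) x(1)] x(2) by metis
  have a': "a' \<in> P" using l' a layer_subset[of l'] by auto
  have lighter: "2 * (2::nat) ^ (r - level a) < 2 ^ (r - level a') + 2 ^ (r - level p)" for p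
  proof -
    have "Suc (r - level a) \<le> r - level a'" using level_le[OF l'(2)] l'(1) a(2) by linarith
    then have "(2::nat) ^ Suc (r - level a) \<le> 2 ^ (r - level a')" by (rule power_increasing) simp
    moreover have "(0::nat) < 2 ^ (r - level p)" by simp
    ultimately show ?thesis unfolding power_Suc by linarith
  qed
  have "p \<otimes> (a' \<otimes> m) \<in> reduction_target" if p: "p \<in> P" for p
  proof -
    have "weight (a # a # rest) < weight (p # a' # rest)"
      unfolding weight_Cons using lighter[of p] by linarith
    then show ?thesis
      using heavier_in_target[of "p # a' # rest"] rest_gens rest_length p a' by (simp add: m_def)
  qed
  then have "b \<otimes> (a' \<otimes> m) \<in> reduction_target"
    using genideal_mult_mem[OF reduction_target_ideal gens_carrier _ _ b] a' m gens_carrier by blast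
  moreover have "x \<otimes> (a \<otimes> m) = b \<otimes> (a' \<otimes> m)"
  proof -
    have "x \<in> carrier R" "b \<in> carrier R" "a \<in> carrier R" "a' \<in> carrier R"
      using x(1) a(2) layer_carrier b ideal.Icarr[OF Idl_gens_ideal] a_gen a' gens_carrier by auto
    then have "x \<otimes> (a \<otimes> m) = (a \<otimes> x) \<otimes> m" using m by (simp add: m_ac)
    also have "\<dots> = b \<otimes> (a' \<otimes> m)" using \<open>b \<in> carrier R\<close> \<open>a' \<in> carrier R\<close> m
      by (simp add: ax m_ac)
    finally show ?thesis .
  qed
  ultimately show ?thesis by (simp add: m_def)
qed

lemma square_times_in_target: "a \<otimes> (a \<otimes> ring_prod_list R rest) \<in> reduction_target"
proof -
  define m where "m = ring_prod_list R rest"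
  define L where "L = level a"
  have m: "m \<in> carrier R" unfolding m_def by (rule rest_prod_closed)
  have aL: "a \<in> Ps L" "L \<le> r" using level_mem[OF a_gen] by (auto simp: L_def)
  have ac: "a \<in> carrier R" using a_gen gens_carrier by auto
  have PsL: "Ps L \<subseteq> carrier R" "finite (Ps L - {a})" using layer_carrier finite_layer aL by auto
  define S where "S = (\<Oplus>x\<in>Ps L - {a}. x \<otimes> (a \<otimes> m))"
  have S: "S \<in> reduction_target" unfolding S_def m_def L_def
    by (rule ideal_finsum_closed[OF reduction_target_ideal])
      (use PsL in \<open>auto simp: L_def intro: layer_mate_times_in_target\<close>)
  have Sc: "S \<in> carrier R" unfolding S_def using PsL ac m by (intro finsum_closed) auto
  have "layer_sum L \<otimes> (a \<otimes> m) = (\<Oplus>x\<in>Ps L. x \<otimes> (a \<otimes> m))"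
    unfolding layer_sum_def using finite_layer aL PsL ac m by (subst finsum_ldistr) auto
  also have "\<dots> = (\<Oplus>x\<in>insert a (Ps L - {a}). x \<otimes> (a \<otimes> m))"
    using aL by (simp add: insert_absorb)
  also have "\<dots> = a \<otimes> (a \<otimes> m) \<oplus> S"
    unfolding S_def using PsL ac m by (subst finsum_insert) auto
  finally have sum: "layer_sum L \<otimes> (a \<otimes> m) = a \<otimes> (a \<otimes> m) \<oplus> S" .
  have "a \<otimes> m \<in> ideal_power R (Idl P) (card P)"
    using ring_prod_list_in_ideal_power[of "a # rest" "Idl P"] a_gen rest_gens gens_subset_Idl rest_length
    by (auto simp: m_def)
  then have "layer_sum L \<otimes> (a \<otimes> m) \<in> reduction_target"
    unfolding reduction_target_def using layer_sum_in_layer_ideal[OF aL(2)] by (rule ideal_prod.prod[rotated])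
  then show ?thesis
    using ideal_add_cancel_right[OF reduction_target_ideal _ Sc _ S] sum ac m by (simp add: m_def)
qed

end

lemma gens_prod_in_target:
  "length xs = Suc (card P) \<Longrightarrow> set xs \<subseteq> P \<Longrightarrow> ring_prod_list R xs \<in> reduction_target"
proof (induction "Suc (card P) * 2 ^ r - weight xs" arbitrary: xs rule: less_induct)
  case less
  have xs_carrier: "set xs \<subseteq> carrier R" using less.prems gens_carrier by auto
  show ?case
  proof (cases "\<exists>x\<in>set xs. x \<in> Ps 0")
    case True
    then obtain x us ws where x: "x \<in> Ps 0" and xs: "xs = us @ x # ws" by (metis split_list)
    have "ring_prod_list R xs = x \<otimes> ring_prod_list R (us @ ws)"
      using xs xs_carrier by (simp add: ring_prod_list_move_to_front)
    moreover have "ring_prod_list R (us @ ws) \<in> ideal_power R (Idl P) (card P)"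
      using ring_prod_list_in_ideal_power[of "us @ ws" "Idl P"] less.prems xs gens_subset_Idl by auto
    ultimately show ?thesis
      unfolding reduction_target_def using x layer0_subset_layer_ideal by (auto intro: ideal_prod.prod)
  next
    case False
    have "card (set xs) < length xs" using less.prems finite_gens card_mono[of P "set xs"] by simp
    then have "\<not> distinct xs" using distinct_card by fastforce
    then obtain us vs ws a where xs: "xs = us @ [a] @ vs @ [a] @ ws"
      using not_distinct_decomp by blast
    define rest where "rest = us @ vs @ ws"
    have a: "a \<in> P" "set rest \<subseteq> P" using less.prems xs by (auto simp: rest_def)
    have "0 < level a" using False level_mem[OF a(1)] xs by (cases "level a") auto
    moreover have "Suc (length rest) = card P" using less.prems xs by (simp add: rest_def)
    moreover have "ring_prod_list R ys \<in> reduction_target"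
      if "length ys = Suc (card P)" "set ys \<subseteq> P" "weight (a # a # rest) < weight ys" for ys
    proof (rule less.hyps[OF _ that(1,2)])
      have "weight xs = weight (a # a # rest)"
        by (simp add: xs rest_def weight_append weight_Cons)
      moreover have "weight ys \<le> Suc (card P) * 2 ^ r" using weight_le[of ys] that(1) by simp
      ultimately show "Suc (card P) * 2 ^ r - weight ys < Suc (card P) * 2 ^ r - weight xs"
        using that(3) by linarith
    qed
    ultimately have "a \<otimes> (a \<otimes> ring_prod_list R rest) \<in> reduction_target"
      using square_times_in_target[OF a(1) _ a(2)] by blast
    moreover have "ring_prod_list R xs = a \<otimes> ring_prod_list R (us @ vs @ a # ws)"
      using ring_prod_list_move_to_front[of us a "vs @ a # ws"] xs_carrier by (simp add: xs)
    moreover have "ring_prod_list R (us @ vs @ a # ws) = a \<otimes> ring_prod_list R rest"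
      using ring_prod_list_move_to_front[of "us @ vs" a ws] xs_carrier by (simp add: xs rest_def)
    ultimately show ?thesis by simp
  qed
qed

lemma is_reduction_layer_ideal: "is_reduction R layer_ideal (Idl P)"
  unfolding is_reduction_def
proof (intro conjI exI)
  show "layer_ideal \<subseteq> Idl P" by (rule layer_ideal_subset)
  have "Ps 0 \<noteq> {}" using card_layer0 by auto
  then show "1 \<le> card P"
    using layer_subset[of 0] finite_gens by (simp add: Suc_le_eq card_gt_0_iff) blast
  have "ideal_power R (Idl P) (Suc (card P)) \<subseteq> reduction_target"
    using gens_carrier reduction_target_ideal gens_prod_in_target by (rule ideal_power_genideal_subset)
  moreover have "reduction_target \<subseteq> ideal_power R (Idl P) (Suc (card P))"
    unfolding reduction_target_def
    using ideal_prod_mono_left[OF layer_ideal_ideal _ layer_ideal_subset]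
      ideal_power_is_ideal[OF Idl_gens_ideal] by simp
  ultimately show "ideal_power R (Idl P) (card P + 1) = layer_ideal \<cdot> ideal_power R (Idl P) (card P)"
    unfolding reduction_target_def Suc_eq_plus1 by (rule subset_antisym)
qed

end

theorem theorem1p1:
  fixes R (structure) and P :: "'a set" and I :: "'a set" and r :: nat
    and Ps :: "nat \<Rightarrow> 'a set" and g :: "nat \<Rightarrow> 'a" and J :: "'a set"
  assumes "cring R" and "noetherian_ring R" and "\<one>\<^bsub>R\<^esub> \<noteq> \<zero>\<^bsub>R\<^esub>"
    and "finite P" and "P \<subseteq> carrier R"
    and "I = Idl\<^bsub>R\<^esub> P"
    and "\<And>l. l \<le> r \<Longrightarrow> Ps l \<subseteq> P"
    and SV1: "P = (\<Union>l\<in>{0..r}. Ps l)"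
    and SV2: "card (Ps 0) = 1"
    and SV3: "\<And>l a a''. 0 < l \<Longrightarrow> l \<le> r \<Longrightarrow> a \<in> Ps l \<Longrightarrow> a'' \<in> Ps l \<Longrightarrow> a \<noteq> a'' \<Longrightarrow>
               \<exists>l' a' b. l' < l \<and> a' \<in> Ps l' \<and> b \<in> I \<and> a \<otimes>\<^bsub>R\<^esub> a'' = a' \<otimes>\<^bsub>R\<^esub> b"
    and "\<And>l. l \<le> r \<Longrightarrow> g l = (\<Oplus>\<^bsub>R\<^esub>a\<in>Ps l. a)"
    and "J = Idl\<^bsub>R\<^esub> (g ` {0..r})"
  shows "is_reduction R J I"
proof -
  interpret layered_generators R P r Ps
    using assms(1,4,5,7) SV1 SV2 SV3 unfolding assms(6)
    by (simp add: layered_generators_def layered_generators_axioms_def)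
  have "g ` {0..r} = layer_sum ` {0..r}"
    using assms(11) by (simp add: layer_sum_def)
  then have "J = layer_ideal" using assms(12) by (simp add: layer_ideal_def)
  then show ?thesis using is_reduction_layer_ideal assms(6) by simp
qed

end
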